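(* Let $q\in\mathrm{prob}(\{0,1\}^2)$. The set $B_\le:=\{(\pi_1,\chi^{(1)}_{1|1},\chi^{(2)}_{1|1}):(\pi,\chi)\in\Theta_2,\ \mu(\pi,\chi)=q,\ \chi^{(1)}_{0|0}\le\chi^{(2)}_{0|0}\}$ is nonempty and equals the set of all $(\mathrm{Pr},\mathrm{Se}_1,\mathrm{Se}_2)\in[0,1]^3$ satisfying $-q_{00}\le\mathrm{Pr}(\mathrm{Se}_1+\mathrm{Se}_2-1)\le q_{11}$, $\mathrm{Pr}-q_{0+}\le\mathrm{Pr}\,\mathrm{Se}_1\le q_{1+}$, $\mathrm{Pr}-q_{+0}\le\mathrm{Pr}\,\mathrm{Se}_2\le q_{+1}$, and $q_{01}-q_{10}\le\mathrm{Pr}(\mathrm{Se}_2-\mathrm{Se}_1)\le q_{01}$.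
   Context: A subscript $+$ denotes summation over the replaced index. $\mathrm{prob}(\mathcal{X})$ is the set of probability densities on a finite set $\mathcal{X}$; $\mathrm{markov}(\mathcal{X},\mathcal{Y})$ the set of maps $(x,y)\mapsto p_{y|x}$ with $p_{\cdot|x}\in\mathrm{prob}(\mathcal{Y})$. $\Theta_2:=\mathrm{prob}(\{0,1\})\times\mathrm{markov}(\{0,1\},\{0,1\}^2)$, $\mu(\pi,\chi)_j:=\sum_{i=0}^1\pi_i\chi_{j|i}$ for $j\in\{0,1\}^2$, $\chi^{(1)}_{\iota|i}:=\chi_{\iota0|i}+\chi_{\iota1|i}$, $\chi^{(2)}_{\iota|i}:=\chi_{0\iota|i}+\chi_{1\iota|i}$. *)

theory Defs
  imports Complex_Main
begin

definition prob_on :: "'a set \<Rightarrow> ('a \<Rightarrow> real) \<Rightarrow> bool" where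
  "prob_on X p \<longleftrightarrow> (\<forall>x\<in>X. 0 \<le> p x) \<and> (\<Sum>x\<in>X. p x) = 1"

text \<open>Markov kernels: k x y stands for p_{y|x}.\<close>
definition markov_on :: "'a set \<Rightarrow> 'b set \<Rightarrow> ('a \<Rightarrow> 'b \<Rightarrow> real) \<Rightarrow> bool" where
  "markov_on X Y k \<longleftrightarrow> (\<forall>x\<in>X. prob_on Y (k x))"

definition bits :: "nat set" where "bits = {0, 1}"

definition Theta2 :: "((nat \<Rightarrow> real) \<times> (nat \<Rightarrow> nat \<times> nat \<Rightarrow> real)) set" where
  "Theta2 = {(\<pi>, \<chi>). prob_on bits \<pi> \<and> markov_on bits (bits \<times> bits) \<chi>}"

definition mu :: "(nat \<Rightarrow> real) \<Rightarrow> (nat \<Rightarrow> nat \<times> nat \<Rightarrow> real) \<Rightarrow> nat \<times> nat \<Rightarrow> real" where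
  "mu \<pi> \<chi> j = (\<Sum>i\<in>bits. \<pi> i * \<chi> i j)"

text \<open>chi1 \<chi> \<iota> i = \<chi>^(1)_{\<iota>|i},  chi2 \<chi> \<iota> i = \<chi>^(2)_{\<iota>|i}\<close>
definition chi1 :: "(nat \<Rightarrow> nat \<times> nat \<Rightarrow> real) \<Rightarrow> nat \<Rightarrow> nat \<Rightarrow> real" where
  "chi1 \<chi> \<iota> i = \<chi> i (\<iota>, 0) + \<chi> i (\<iota>, 1)"

definition chi2 :: "(nat \<Rightarrow> nat \<times> nat \<Rightarrow> real) \<Rightarrow> nat \<Rightarrow> nat \<Rightarrow> real" where
  "chi2 \<chi> \<iota> i = \<chi> i (0, \<iota>) + \<chi> i (1, \<iota>)"

end

theory Submission
  imports Defs
begin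

text \<open>
  Put \<open>x\<^sub>j = \<pi>\<^sub>1 \<chi>\<^sub>j\<^sub>|\<^sub>1\<close>, the part of the observed table \<open>q\<close> coming from the positive class.
  Then \<open>0 \<le> x \<le> q\<close> cellwise, the total of \<open>x\<close> is \<open>Pr\<close>, its two margins are \<open>Pr Se\<^sub>1\<close> and
  \<open>Pr Se\<^sub>2\<close>, and the side condition on \<open>\<chi>\<^sub>\<cdot>\<^sub>|\<^sub>0\<close> says \<open>q\<^sub>0\<^sub>1 - x\<^sub>0\<^sub>1 \<le> q\<^sub>1\<^sub>0 - x\<^sub>1\<^sub>0\<close>, i.e.
  \<open>q\<^sub>0\<^sub>1 - q\<^sub>1\<^sub>0 \<le> Pr (Se\<^sub>2 - Se\<^sub>1)\<close>. Conversely any such sub-table \<open>x\<close> is realised by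
  normalising \<open>x\<close> and \<open>q - x\<close>. Once total and margins are fixed, \<open>x\<close> has the single
  free parameter \<open>x\<^sub>1\<^sub>1\<close>, and eliminating it yields the stated linear inequalities.
\<close>

lemma sum_bits: "(\<Sum>i\<in>bits. f i) = (f 0 + f 1 :: real)"
  by (simp add: bits_def)

lemma bits_times_bits: "bits \<times> bits = {(0,0), (0,1), (1,0), (1,1)}"
  by (auto simp: bits_def)

lemma sum_bits_times_bits:
  "(\<Sum>j\<in>bits \<times> bits. f j) = (f (0,0) + f (0,1) + f (1,0) + f (1,1) :: real)"
  by (simp add: bits_times_bits)

lemma ball_bits_times_bits:
  "(\<forall>j\<in>bits \<times> bits. P j) \<longleftrightarrow> P (0,0) \<and> P (0,1) \<and> P (1,0) \<and> P (1,1)"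
  by (simp add: bits_times_bits)

lemma prob_on_bits_iff: "prob_on bits p \<longleftrightarrow> 0 \<le> p 0 \<and> 0 \<le> p 1 \<and> p 0 + p 1 = 1"
  by (auto simp: prob_on_def sum_bits bits_def)

lemma prob_on_bits_times_bits_iff:
  "prob_on (bits \<times> bits) p \<longleftrightarrow>
     0 \<le> p (0,0) \<and> 0 \<le> p (0,1) \<and> 0 \<le> p (1,0) \<and> 0 \<le> p (1,1) \<and>
     p (0,0) + p (0,1) + p (1,0) + p (1,1) = 1"
  unfolding prob_on_def sum_bits_times_bits ball_bits_times_bits by auto

lemma Theta2_iff:
  "(\<pi>, \<chi>) \<in> Theta2 \<longleftrightarrow>
     prob_on bits \<pi> \<and> prob_on (bits \<times> bits) (\<chi> 0) \<and> prob_on (bits \<times> bits) (\<chi> 1)"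
  by (simp add: Theta2_def markov_on_def bits_def)

lemma mu_eq: "mu \<pi> \<chi> j = \<pi> 0 * \<chi> 0 j + \<pi> 1 * \<chi> 1 j"
  by (simp add: mu_def sum_bits)

definition normalize_or :: "('a \<Rightarrow> real) \<Rightarrow> real \<Rightarrow> ('a \<Rightarrow> real) \<Rightarrow> 'a \<Rightarrow> real" where
  "normalize_or d c p = (if c = 0 then d else (\<lambda>x. p x / c))"

lemma mult_normalize_or:
  assumes "c = 0 \<Longrightarrow> p x = 0"
  shows "c * normalize_or d c p x = p x"
  using assms by (simp add: normalize_or_def)

lemma prob_on_normalize_or:
  assumes "prob_on X d" and "\<forall>x\<in>X. 0 \<le> p x" and "(\<Sum>x\<in>X. p x) = c"
  shows "prob_on X (normalize_or d c p)"
proof (cases "c = 0")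
  case False
  have "0 \<le> c" using assms(2,3) sum_nonneg by metis
  then show ?thesis
    using False assms(2,3) by (simp add: prob_on_def normalize_or_def sum_divide_distrib[symmetric])
qed (use assms(1) in \<open>simp add: normalize_or_def\<close>)

lemma normalize_or_mono:
  assumes "0 \<le> c" and "p x \<le> p y" and "d x \<le> d y"
  shows "normalize_or d c p x \<le> normalize_or d c p y"
  using assms by (simp add: normalize_or_def divide_right_mono)

definition bernoulli :: "real \<Rightarrow> nat \<Rightarrow> real" where
  "bernoulli s i = (if i = 1 then s else 1 - s)"

definition product_bernoulli :: "real \<Rightarrow> real \<Rightarrow> nat \<times> nat \<Rightarrow> real" where
  "product_bernoulli s t = (\<lambda>(a, b). bernoulli s a * bernoulli t b)"

lemma prob_on_bernoulli: "prob_on bits (bernoulli s) \<longleftrightarrow> s \<in> {0..1}"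
  by (auto simp: prob_on_bits_iff bernoulli_def)

lemma prob_on_product_bernoulli:
  assumes "s \<in> {0..1}" and "t \<in> {0..1}"
  shows "prob_on (bits \<times> bits) (product_bernoulli s t)"
proof -
  have "(1 - s) * (1 - t) + (1 - s) * t + s * (1 - t) + s * t = 1"
    by (simp add: algebra_simps)
  then show ?thesis
    using assms by (simp add: prob_on_bits_times_bits_iff product_bernoulli_def bernoulli_def)
qed

lemma product_bernoulli_margins:
  "product_bernoulli s t (1,0) + product_bernoulli s t (1,1) = s"
  "product_bernoulli s t (0,1) + product_bernoulli s t (1,1) = t"
  by (simp_all add: product_bernoulli_def bernoulli_def algebra_simps)

definition subtable_exists :: "(nat \<times> nat \<Rightarrow> real) \<Rightarrow> real \<Rightarrow> real \<Rightarrow> real \<Rightarrow> bool" where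
  "subtable_exists q P A C \<longleftrightarrow>
     (\<exists>x. (\<forall>j\<in>bits \<times> bits. 0 \<le> x j \<and> x j \<le> q j) \<and> (\<Sum>j\<in>bits \<times> bits. x j) = P \<and>
          x (1,0) + x (1,1) = A \<and> x (0,1) + x (1,1) = C)"

lemma subtable_exists_iff:
  assumes q: "\<forall>j\<in>bits \<times> bits. 0 \<le> q j"
  shows "subtable_exists q P A C \<longleftrightarrow>
    0 \<le> A \<and> A \<le> P \<and> 0 \<le> C \<and> C \<le> P \<and> P - q (0,0) \<le> A + C \<and> A + C \<le> P + q (1,1) \<and>
    P - (q (0,0) + q (0,1)) \<le> A \<and> A \<le> q (1,0) + q (1,1) \<and>
    P - (q (0,0) + q (1,0)) \<le> C \<and> C \<le> q (0,1) + q (1,1) \<and>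
    A - C \<le> q (1,0) \<and> C - A \<le> q (0,1)"
  (is "_ \<longleftrightarrow> ?ineqs")
proof
  assume "subtable_exists q P A C"
  then show ?ineqs
    using q unfolding subtable_exists_def ball_bits_times_bits sum_bits_times_bits by auto
next
  assume ?ineqs
  \<comment> \<open>the smallest admissible value of \<open>x\<^sub>1\<^sub>1\<close>; every cell is then an affine function of it\<close>
  define t where "t = max (max 0 (A - q (1,0))) (max (C - q (0,1)) (A + C - P))"
  define x :: "nat \<times> nat \<Rightarrow> real" where
    "x j = (if j = (1,1) then t else if j = (1,0) then A - t
            else if j = (0,1) then C - t else P - A - C + t)" for j
  have "\<forall>j\<in>bits \<times> bits. 0 \<le> x j \<and> x j \<le> q j"
    using q \<open>?ineqs\<close> unfolding ball_bits_times_bits x_def t_def by (auto simp: max_def)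
  moreover have "(\<Sum>j\<in>bits \<times> bits. x j) = P" "x (1,0) + x (1,1) = A" "x (0,1) + x (1,1) = C"
    by (simp_all add: sum_bits_times_bits x_def)
  ultimately show "subtable_exists q P A C"
    unfolding subtable_exists_def by blast
qed

definition realizes :: "(nat \<times> nat \<Rightarrow> real) \<Rightarrow> (nat \<Rightarrow> real) \<Rightarrow> (nat \<Rightarrow> nat \<times> nat \<Rightarrow> real) \<Rightarrow> bool"
  where
  "realizes q \<pi> \<chi> \<longleftrightarrow> (\<pi>, \<chi>) \<in> Theta2 \<and> (\<forall>j\<in>bits \<times> bits. mu \<pi> \<chi> j = q j) \<and>
     chi1 \<chi> 0 0 \<le> chi2 \<chi> 0 0"

lemma realizes_imp_subtable:
  assumes "realizes q \<pi> \<chi>"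
  shows "\<pi> 1 \<in> {0..1}" "chi1 \<chi> 1 1 \<in> {0..1}" "chi2 \<chi> 1 1 \<in> {0..1}"
    and "subtable_exists q (\<pi> 1) (\<pi> 1 * chi1 \<chi> 1 1) (\<pi> 1 * chi2 \<chi> 1 1)"
    and "q (0,1) - q (1,0) \<le> \<pi> 1 * chi2 \<chi> 1 1 - \<pi> 1 * chi1 \<chi> 1 1"
proof -
  have \<pi>: "0 \<le> \<pi> 0" "0 \<le> \<pi> 1" "\<pi> 0 + \<pi> 1 = 1"
    and \<chi>0: "prob_on (bits \<times> bits) (\<chi> 0)" and \<chi>1: "prob_on (bits \<times> bits) (\<chi> 1)"
    and q: "\<forall>j\<in>bits \<times> bits. q j = \<pi> 0 * \<chi> 0 j + \<pi> 1 * \<chi> 1 j"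
    and side: "\<chi> 0 (0,1) \<le> \<chi> 0 (1,0)"
    using assms by (auto simp: realizes_def Theta2_iff prob_on_bits_iff mu_eq chi1_def chi2_def)
  then show "\<pi> 1 \<in> {0..1}" "chi1 \<chi> 1 1 \<in> {0..1}" "chi2 \<chi> 1 1 \<in> {0..1}"
    by (auto simp: prob_on_bits_times_bits_iff chi1_def chi2_def)
  define x where "x j = \<pi> 1 * \<chi> 1 j" for j
  have "\<forall>j\<in>bits \<times> bits. 0 \<le> x j \<and> x j \<le> q j"
    using \<pi> \<chi>0 \<chi>1 q by (auto simp: x_def prob_on_def)
  moreover have "(\<Sum>j\<in>bits \<times> bits. x j) = \<pi> 1"
    using \<chi>1 by (simp add: x_def prob_on_def sum_distrib_left[symmetric])
  moreover have "x (1,0) + x (1,1) = \<pi> 1 * chi1 \<chi> 1 1" "x (0,1) + x (1,1) = \<pi> 1 * chi2 \<chi> 1 1"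
    by (simp_all add: x_def chi1_def chi2_def distrib_left)
  ultimately show "subtable_exists q (\<pi> 1) (\<pi> 1 * chi1 \<chi> 1 1) (\<pi> 1 * chi2 \<chi> 1 1)"
    unfolding subtable_exists_def by blast
  have "\<pi> 0 * \<chi> 0 (0,1) \<le> \<pi> 0 * \<chi> 0 (1,0)"
    using \<pi>(1) side by (simp add: mult_left_mono)
  then show "q (0,1) - q (1,0) \<le> \<pi> 1 * chi2 \<chi> 1 1 - \<pi> 1 * chi1 \<chi> 1 1"
    using q unfolding ball_bits_times_bits by (simp add: chi1_def chi2_def algebra_simps)
qed

lemma subtable_imp_realizes:
  assumes q: "prob_on (bits \<times> bits) q"
    and P: "P \<in> {0..1}" and S1: "S1 \<in> {0..1}" and S2: "S2 \<in> {0..1}"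
    and sub: "subtable_exists q P (P * S1) (P * S2)"
    and side: "q (0,1) - q (1,0) \<le> P * S2 - P * S1"
  shows "\<exists>\<pi> \<chi>. realizes q \<pi> \<chi> \<and> \<pi> 1 = P \<and> chi1 \<chi> 1 1 = S1 \<and> chi2 \<chi> 1 1 = S2"
proof -
  obtain x where x: "\<forall>j\<in>bits \<times> bits. 0 \<le> x j \<and> x j \<le> q j"
    and total: "(\<Sum>j\<in>bits \<times> bits. x j) = P"
    and A: "x (1,0) + x (1,1) = P * S1" and C: "x (0,1) + x (1,1) = P * S2"
    using sub unfolding subtable_exists_def by blast
  have total_rest: "(\<Sum>j\<in>bits \<times> bits. q j - x j) = 1 - P"
    using q total by (simp add: prob_on_def sum_subtractf)
  have rest_nonneg: "\<forall>j\<in>bits \<times> bits. 0 \<le> q j - x j"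
    using x by simp
  \<comment> \<open>the fallbacks matter only for an empty class; the point mass at \<open>(0,0)\<close> satisfies
      the side condition\<close>
  define \<chi> :: "nat \<Rightarrow> nat \<times> nat \<Rightarrow> real" where
    "\<chi> i = (if i = 1 then normalize_or (product_bernoulli S1 S2) P x
             else normalize_or (\<lambda>j. if j = (0,0) then 1 else 0) (1 - P) (\<lambda>j. q j - x j))" for i
  have point: "prob_on (bits \<times> bits) (\<lambda>j. if j = (0,0) then 1 else 0 :: real)"
    by (simp add: prob_on_bits_times_bits_iff)
  have "(bernoulli P, \<chi>) \<in> Theta2"
    using P S1 S2 x total total_rest rest_nonneg point
    by (simp add: Theta2_iff prob_on_bernoulli \<chi>_def prob_on_normalize_or prob_on_product_bernoulli)
  moreover have "mu (bernoulli P) \<chi> j = q j" if "j \<in> bits \<times> bits" for j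
  proof -
    have finite: "finite (bits \<times> bits)"
      by (simp add: bits_def)
    have "P * \<chi> 1 j = x j"
      unfolding \<chi>_def
      using sum_nonneg_eq_0_iff[OF finite, of x] x total that by (auto intro!: mult_normalize_or)
    moreover have "(1 - P) * \<chi> 0 j = q j - x j"
      unfolding \<chi>_def
      using sum_nonneg_eq_0_iff[OF finite, of "\<lambda>j. q j - x j"] rest_nonneg total_rest that
      by (auto intro!: mult_normalize_or)
    ultimately show ?thesis by (simp add: mu_eq bernoulli_def)
  qed
  moreover have "chi1 \<chi> 0 0 \<le> chi2 \<chi> 0 0"
  proof -
    have "q (0,1) - x (0,1) \<le> q (1,0) - x (1,0)"
      using side A C by simp
    then have "\<chi> 0 (0,1) \<le> \<chi> 0 (1,0)"
      unfolding \<chi>_def using P by (simp add: normalize_or_mono)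
    then show ?thesis by (simp add: chi1_def chi2_def)
  qed
  moreover have "chi1 \<chi> 1 1 = S1" "chi2 \<chi> 1 1 = S2"
    using A C product_bernoulli_margins
    by (auto simp: chi1_def chi2_def \<chi>_def normalize_or_def add_divide_distrib[symmetric])
  ultimately show ?thesis
    unfolding realizes_def by (metis bernoulli_def)
qed

theorem lemma8:
  fixes q :: "nat \<times> nat \<Rightarrow> real"
  assumes "prob_on (bits \<times> bits) q"
  defines "B \<equiv> {(\<pi> 1, chi1 \<chi> 1 1, chi2 \<chi> 1 1) | \<pi> \<chi>.
                   (\<pi>, \<chi>) \<in> Theta2 \<and> (\<forall>j\<in>bits \<times> bits. mu \<pi> \<chi> j = q j) \<and>
                   chi1 \<chi> 0 0 \<le> chi2 \<chi> 0 0}"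
  shows "B \<noteq> {} \<and>
    B = {(Pr, Se1, Se2). Pr \<in> {0..1} \<and> Se1 \<in> {0..1} \<and> Se2 \<in> {0..1} \<and>
         - q (0,0) \<le> Pr * (Se1 + Se2 - 1) \<and> Pr * (Se1 + Se2 - 1) \<le> q (1,1) \<and>
         Pr - (q (0,0) + q (0,1)) \<le> Pr * Se1 \<and> Pr * Se1 \<le> q (1,0) + q (1,1) \<and>
         Pr - (q (0,0) + q (1,0)) \<le> Pr * Se2 \<and> Pr * Se2 \<le> q (0,1) + q (1,1) \<and>
         q (0,1) - q (1,0) \<le> Pr * (Se2 - Se1) \<and> Pr * (Se2 - Se1) \<le> q (0,1)}"
    (is "_ \<and> B = ?R")
proof -
  have q_nonneg: "\<forall>j\<in>bits \<times> bits. 0 \<le> q j"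
    using assms(1) by (simp add: prob_on_def)
  have "(P, S1, S2) \<in> B \<longleftrightarrow> (P, S1, S2) \<in> ?R" for P S1 S2
  proof -
    have "(P, S1, S2) \<in> B \<longleftrightarrow>
        (\<exists>\<pi> \<chi>. realizes q \<pi> \<chi> \<and> \<pi> 1 = P \<and> chi1 \<chi> 1 1 = S1 \<and> chi2 \<chi> 1 1 = S2)"
      unfolding B_def realizes_def by blast
    also have "\<dots> \<longleftrightarrow>
        P \<in> {0..1} \<and> S1 \<in> {0..1} \<and> S2 \<in> {0..1} \<and> subtable_exists q P (P * S1) (P * S2) \<and>
        q (0,1) - q (1,0) \<le> P * S2 - P * S1"
      using realizes_imp_subtable subtable_imp_realizes[OF assms(1)] by blast
    finally have mem_B: "(P, S1, S2) \<in> B \<longleftrightarrow> \<dots>" .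
    have "P * S1 \<le> P" "P * S2 \<le> P" if "P \<in> {0..1}" "S1 \<in> {0..1}" "S2 \<in> {0..1}"
      using that by (auto intro: mult_left_le)
    then show ?thesis
      using mem_B q_nonneg unfolding subtable_exists_iff[OF q_nonneg] ball_bits_times_bits
      by (auto simp: algebra_simps)
  qed
  then have "B = ?R" by auto
  moreover have "(1, q (1,0) + q (1,1), q (0,1) + q (1,1)) \<in> ?R"
    using assms(1) by (auto simp: prob_on_bits_times_bits_iff)
  ultimately show ?thesis by blast
qed

end
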